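(* Let $n\ge 5$, $k_1=n-2$, $k_2=k_3=1$, and let $g$ be a left-invariant metric on $\mathrm{SO}(n)$ of form (III) with arbitrary parameters $x_1,x_{12},x_{13},x_{23}>0$. Then its Ricci tensor $r$ at the identity satisfies $r(X,Y)=0$ for all $X\in\mathfrak m_{12}$ and $Y\in\mathfrak m_{13}$.
   Context: Let $n=k_1+k_2+k_3$ with positive integers $k_i$, $\mathfrak{so}(n)$ the Lie algebra of $\mathrm{SO}(n)$, and $B(X,Y)=(n-2)\operatorname{tr}(XY)$ its Killing form. Write $n\times n$ matrices in block form with diagonal blocks of sizes $k_1,k_2,k_3$. Let $\mathfrak m_i=\mathfrak{so}(k_i)$ embedded as the $i$-th diagonal block ($\mathfrak m_i=0$ if $k_i=1$), and for $1\le i<j\le 3$ let $\mathfrak m_{ij}$ be the set of matrices whose only nonzero blocks are an arbitrary $(i,j)$-block $A\in M(k_i,k_j)$ and the $(j,i)$-block $-A^t$. A left-invariant metric of form (III) (used when $k_1=n-2$, $k_2=k_3=1$, so $\mathfrak m_2=\mathfrak m_3=0$) is the one whose value at the identity is $x_1(-B)|_{\mathfrak m_1}+x_{12}(-B)|_{\mathfrak m_{12}}+x_{13}(-B)|_{\mathfrak m_{13}}+x_{23}(-B)|_{\mathfrak m_{23}}$ with the summands mutually orthogonal and all $x$'s positive. (Here $\mathfrak m_{12}$ and $\mathfrak m_{13}$ are equivalent $\mathrm{Ad}(\mathrm{SO}(n-2))$-modules.) The Ricci tensor is that of the Levi-Civita connection, as a bilinear form on $\mathfrak{so}(n)=T_e\mathrm{SO}(n)$.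 *)

theory Defs
  imports Complex_Main
begin

text \<open>Real n x n matrices are represented as functions nat => nat => real; only
entries with both indices < n are meaningful, and elements of so(n) are
required to vanish outside that range (canonical representatives).\<close>

type_synonym mat = "nat \<Rightarrow> nat \<Rightarrow> real"

definition so :: "nat \<Rightarrow> mat set" where
  "so n = {X. (\<forall>i j. X i j = - X j i) \<and> (\<forall>i j. (n \<le> i \<or> n \<le> j) \<longrightarrow> X i j = 0)}"

definition mmul :: "nat \<Rightarrow> mat \<Rightarrow> mat \<Rightarrow> mat" where
  "mmul n X Y = (\<lambda>i j. if i < n \<and> j < n then (\<Sum>k<n. X i k * Y k j) else 0)"

definition bracket :: "nat \<Rightarrow> mat \<Rightarrow> mat \<Rightarrow> mat" where
  "bracket n X Y = (\<lambda>i j. mmul n X Y i j - mmul n Y X i j)"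

definition mtrace :: "nat \<Rightarrow> mat \<Rightarrow> real" where
  "mtrace n X = (\<Sum>i<n. X i i)"

definition killing :: "nat \<Rightarrow> mat \<Rightarrow> mat \<Rightarrow> real" where
  "killing n X Y = (real n - 2) * mtrace n (mmul n X Y)"

definition blk :: "nat \<Rightarrow> nat \<Rightarrow> nat \<Rightarrow> nat" where
  "blk k1 k2 a = (if a < k1 then 1 else if a < k1 + k2 then 2 else 3)"

definition proj_diag :: "nat \<Rightarrow> nat \<Rightarrow> nat \<Rightarrow> mat \<Rightarrow> mat" where
  "proj_diag k1 k2 i X = (\<lambda>a b. if blk k1 k2 a = i \<and> blk k1 k2 b = i then X a b else 0)"

definition proj_off :: "nat \<Rightarrow> nat \<Rightarrow> nat \<Rightarrow> nat \<Rightarrow> mat \<Rightarrow> mat" where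
  "proj_off k1 k2 i j X = (\<lambda>a b. if (blk k1 k2 a = i \<and> blk k1 k2 b = j) \<or>
                                     (blk k1 k2 a = j \<and> blk k1 k2 b = i) then X a b else 0)"

text \<open>m_ij: elements of so(n) whose only nonzero blocks are the (i,j) block A and the (j,i) block -A^t.\<close>
definition m_off :: "nat \<Rightarrow> nat \<Rightarrow> nat \<Rightarrow> nat \<Rightarrow> nat \<Rightarrow> mat set" where
  "m_off n k1 k2 i j = {X \<in> so n. proj_off k1 k2 i j X = X}"

definition metricIII :: "nat \<Rightarrow> real \<Rightarrow> real \<Rightarrow> real \<Rightarrow> real \<Rightarrow> mat \<Rightarrow> mat \<Rightarrow> real" where
  "metricIII n x1 x12 x13 x23 X Y =
     (let k1 = n - 2; k2 = 1 in
        x1 * - killing n (proj_diag k1 k2 1 X) (proj_diag k1 k2 1 Y)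
      + x12 * - killing n (proj_off k1 k2 1 2 X) (proj_off k1 k2 1 2 Y)
      + x13 * - killing n (proj_off k1 k2 1 3 X) (proj_off k1 k2 1 3 Y)
      + x23 * - killing n (proj_off k1 k2 2 3 X) (proj_off k1 k2 2 3 Y))"

text \<open>Levi-Civita connection of a left-invariant metric g (inner product on so(n)) on
left-invariant vector fields, determined by the Koszul formula
  2 g(nabla_X Y, Z) = g([X,Y],Z) - g([Y,Z],X) + g([Z,X],Y).\<close>
definition levi_civita :: "nat \<Rightarrow> (mat \<Rightarrow> mat \<Rightarrow> real) \<Rightarrow> mat \<Rightarrow> mat \<Rightarrow> mat" where
  "levi_civita n g X Y = (THE W. W \<in> so n \<and> (\<forall>Z \<in> so n.
      2 * g W Z = g (bracket n X Y) Z - g (bracket n Y Z) X + g (bracket n Z X) Y))"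

definition curv :: "nat \<Rightarrow> (mat \<Rightarrow> mat \<Rightarrow> real) \<Rightarrow> mat \<Rightarrow> mat \<Rightarrow> mat \<Rightarrow> mat" where
  "curv n g X Y Z = (\<lambda>a b.
      levi_civita n g X (levi_civita n g Y Z) a b
    - levi_civita n g Y (levi_civita n g X Z) a b
    - levi_civita n g (bracket n X Y) Z a b)"

text \<open>Elementary basis E_ab = e_a e_b^t - e_b e_a^t (a<b) of so(n); the coefficient of
E_ab in a skew matrix M is M a b, so the trace of a linear map L on so(n) is
sum_{a<b<n} (L E_ab) a b.\<close>
definition Ebasis :: "nat \<Rightarrow> nat \<Rightarrow> mat" where
  "Ebasis a b = (\<lambda>i j. (if i = a \<and> j = b then 1 else 0) - (if i = b \<and> j = a then 1 else 0))"

definition so_trace :: "nat \<Rightarrow> (mat \<Rightarrow> mat) \<Rightarrow> real" where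
  "so_trace n L = (\<Sum>b<n. \<Sum>a<b. L (Ebasis a b) a b)"

definition ricci :: "nat \<Rightarrow> (mat \<Rightarrow> mat \<Rightarrow> real) \<Rightarrow> mat \<Rightarrow> mat \<Rightarrow> real" where
  "ricci n g X Y = so_trace n (\<lambda>Z. curv n g Z X Y)"

end

theory Submission
  imports Defs
begin

text \<open>
  The metric (III) is diagonal in the basis \<open>E\<^sub>a\<^sub>b\<close> with positive weights depending only on
  the blocks of \<open>a\<close> and \<open>b\<close>. Conjugation by the reflection of the single coordinate \<open>n - 2\<close>
  (the one-dimensional second block) is a Lie algebra automorphism of \<open>so(n)\<close> preserving
  such a metric, so it preserves the Levi-Civita connection, the curvature and the Ricci tensor.
  It acts as \<open>-1\<close> on \<open>m\<^sub>1\<^sub>2\<close> and as the identity on \<open>m\<^sub>1\<^sub>3\<close>, hence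
  \<open>r(X, Y) = r(-X, Y) = -r(X, Y)\<close>.
\<close>

text \<open>For skew \<open>X\<close>, \<open>Y\<close> this is \<open>\<Sum> c a k * X a k * Y a k\<close>: an inner product that is
  diagonal in the basis \<open>E\<^sub>a\<^sub>b\<close>.\<close>
definition weighted_form :: "nat \<Rightarrow> (nat \<Rightarrow> nat \<Rightarrow> real) \<Rightarrow> mat \<Rightarrow> mat \<Rightarrow> real" where
  "weighted_form n c X Y = - (\<Sum>a<n. \<Sum>k<n. c a k * X a k * Y k a)"

definition mat_scale :: "real \<Rightarrow> mat \<Rightarrow> mat" where
  "mat_scale t A = (\<lambda>i j. t * A i j)"

definition mat_linear :: "(mat \<Rightarrow> real) \<Rightarrow> bool" where
  "mat_linear F \<longleftrightarrow>
     (\<forall>A B. F (\<lambda>i j. A i j + B i j) = F A + F B) \<and> (\<forall>t A. F (mat_scale t A) = t * F A)"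

definition koszul :: "nat \<Rightarrow> (mat \<Rightarrow> mat \<Rightarrow> real) \<Rightarrow> mat \<Rightarrow> mat \<Rightarrow> mat \<Rightarrow> real" where
  "koszul n g X Y Z = g (bracket n X Y) Z - g (bracket n Y Z) X + g (bracket n Z X) Y"

lemma levi_civita_def_koszul:
  "levi_civita n g X Y = (THE W. W \<in> so n \<and> (\<forall>Z \<in> so n. 2 * g W Z = koszul n g X Y Z))"
  by (simp add: levi_civita_def koszul_def)

lemma so_skew: "X \<in> so n \<Longrightarrow> X i j = - X j i"
  unfolding so_def by blast

lemma so_diag: "X \<in> so n \<Longrightarrow> X i i = 0"
  using so_skew[of X n i i] by simp

lemma so_outside: "X \<in> so n \<Longrightarrow> n \<le> i \<or> n \<le> j \<Longrightarrow> X i j = 0"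
  unfolding so_def by blast

lemma soI: "(\<And>i j. X i j = - X j i) \<Longrightarrow> (\<And>i j. n \<le> i \<or> n \<le> j \<Longrightarrow> X i j = 0) \<Longrightarrow> X \<in> so n"
  unfolding so_def by blast

lemma mat_scale_so:
  assumes "A \<in> so n"
  shows "mat_scale t A \<in> so n"
proof (rule soI)
  fix i j
  show "mat_scale t A i j = - mat_scale t A j i"
    using so_skew[OF assms, of i j] by (simp add: mat_scale_def)
  show "n \<le> i \<or> n \<le> j \<Longrightarrow> mat_scale t A i j = 0"
    using so_outside[OF assms, of i j] by (simp add: mat_scale_def)
qed

lemma mat_linear_sum:
  assumes "mat_linear F" "finite S"
  shows "F (\<lambda>i j. \<Sum>p\<in>S. M p i j) = (\<Sum>p\<in>S. F (M p))"
  using assms(2)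
proof (induction S rule: finite_induct)
  case empty
  have "F (\<lambda>i j. 0) = F (mat_scale 0 (\<lambda>i j. 0))" by (simp add: mat_scale_def)
  also have "\<dots> = 0" using assms(1) by (simp add: mat_linear_def)
  finally show ?case by simp
next
  case (insert x S)
  then have "(\<lambda>i j. \<Sum>p\<in>insert x S. M p i j) = (\<lambda>i j. M x i j + (\<Sum>p\<in>S. M p i j))"
    by simp
  with insert assms(1) show ?case by (simp add: mat_linear_def)
qed

lemma sum_triangle_delta:
  fixes n i j :: nat
  shows "(\<Sum>b<n. \<Sum>a<b. if a = i \<and> b = j then v else 0)
       = (if i < j \<and> j < n then v else (0::'a::comm_monoid_add))"
proof -
  have "(\<Sum>a<b. if a = i \<and> b = j then v else 0) = (if b = j then (if i < b then v else 0) else (0::'a))"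
    for b
    by (cases "b = j") (simp_all add: sum.delta)
  then show ?thesis by (simp add: sum.delta')
qed

lemma so_Ebasis_expansion:
  assumes "Z \<in> so n"
  shows "(\<lambda>i j. \<Sum>b<n. \<Sum>a<b. Z a b * Ebasis a b i j) = Z"
proof (intro ext)
  fix i j
  have "(\<Sum>b<n. \<Sum>a<b. Z a b * Ebasis a b i j)
      = (\<Sum>b<n. \<Sum>a<b. if a = i \<and> b = j then Z i j else 0)
      - (\<Sum>b<n. \<Sum>a<b. if a = j \<and> b = i then Z j i else 0)"
  proof -
    have "Z a b * Ebasis a b i j
        = (if a = i \<and> b = j then Z i j else 0) - (if a = j \<and> b = i then Z j i else 0)" for a b
      unfolding Ebasis_def by (cases "a = i"; cases "b = j"; cases "a = j"; cases "b = i") auto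
    then show ?thesis by (simp add: sum_subtractf)
  qed
  also have "\<dots> = (if i < j \<and> j < n then Z i j else 0) - (if j < i \<and> i < n then Z j i else 0)"
    by (simp only: sum_triangle_delta)
  also have "\<dots> = Z i j"
    using so_skew[OF assms, of i j] so_diag[OF assms, of i] so_outside[OF assms, of i j] by auto
  finally show "(\<Sum>b<n. \<Sum>a<b. Z a b * Ebasis a b i j) = Z i j" .
qed

lemma mat_linear_so_expansion:
  assumes "mat_linear F" "Z \<in> so n"
  shows "F Z = (\<Sum>b<n. \<Sum>a<b. Z a b * F (Ebasis a b))"
proof -
  have "F Z = F (\<lambda>i j. \<Sum>b<n. \<Sum>a<b. mat_scale (Z a b) (Ebasis a b) i j)"
    using so_Ebasis_expansion[OF assms(2)] by (simp add: mat_scale_def)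
  also have "\<dots> = (\<Sum>b<n. \<Sum>a<b. F (mat_scale (Z a b) (Ebasis a b)))"
    by (simp add: mat_linear_sum[OF assms(1)])
  also have "\<dots> = (\<Sum>b<n. \<Sum>a<b. Z a b * F (Ebasis a b))"
    using assms(1) by (simp add: mat_linear_def)
  finally show ?thesis .
qed

lemma sum_square_split:
  fixes h :: "nat \<Rightarrow> nat \<Rightarrow> 'a::comm_monoid_add"
  shows "(\<Sum>a<n. \<Sum>k<n. h a k) = (\<Sum>b<n. \<Sum>a<b. h a b + h b a) + (\<Sum>a<n. h a a)"
  by (induction n) (simp_all add: sum.distrib algebra_simps)

lemma weighted_form_so_right:
  assumes "Z \<in> so n"
  shows "weighted_form n c W Z = (\<Sum>a<n. \<Sum>k<n. c a k * W a k * Z a k)"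
proof -
  have "c a k * W a k * Z k a = - (c a k * W a k * Z a k)" for a k
    using so_skew[OF assms, of k a] by simp
  then show ?thesis by (simp add: weighted_form_def sum_negf)
qed

lemma weighted_form_diff_left:
  "weighted_form n c (\<lambda>i j. A i j - B i j) Z = weighted_form n c A Z - weighted_form n c B Z"
  by (simp add: weighted_form_def algebra_simps sum_subtractf)

lemma bracket_scale_left: "bracket n (mat_scale t A) B = mat_scale t (bracket n A B)"
  by (simp add: bracket_def mmul_def mat_scale_def fun_eq_iff sum_distrib_left algebra_simps)

lemma bracket_scale_right: "bracket n A (mat_scale t B) = mat_scale t (bracket n A B)"
  by (simp add: bracket_def mmul_def mat_scale_def fun_eq_iff sum_distrib_left algebra_simps)

lemma weighted_form_scale_left: "weighted_form n c (mat_scale t A) B = t * weighted_form n c A B"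
  by (simp add: weighted_form_def mat_scale_def sum_distrib_left algebra_simps)

lemma weighted_form_scale_right: "weighted_form n c A (mat_scale t B) = t * weighted_form n c A B"
  by (simp add: weighted_form_def mat_scale_def sum_distrib_left algebra_simps)

lemma koszul_scale_left:
  "koszul n (weighted_form n c) (mat_scale t X) Y Z = t * koszul n (weighted_form n c) X Y Z"
  by (simp add: koszul_def bracket_scale_left bracket_scale_right weighted_form_scale_left
      weighted_form_scale_right algebra_simps)

lemma koszul_scale_middle:
  "koszul n (weighted_form n c) X (mat_scale t Y) Z = t * koszul n (weighted_form n c) X Y Z"
  by (simp add: koszul_def bracket_scale_left bracket_scale_right weighted_form_scale_left
      weighted_form_scale_right algebra_simps)

lemma mat_linear_koszul: "mat_linear (koszul n (weighted_form n c) X Y)"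
  unfolding mat_linear_def koszul_def weighted_form_def bracket_def mmul_def mat_scale_def
  by (simp add: algebra_simps sum.distrib sum_distrib_left sum_subtractf)

definition refl_sign :: "nat \<Rightarrow> nat \<Rightarrow> real" where
  "refl_sign m i = (if i = m then -1 else 1)"

definition reflect :: "nat \<Rightarrow> mat \<Rightarrow> mat" where
  "reflect m A = (\<lambda>i j. refl_sign m i * refl_sign m j * A i j)"

lemma reflect_reflect [simp]: "reflect m (reflect m A) = A"
  by (simp add: reflect_def fun_eq_iff refl_sign_def)

lemma reflect_so:
  assumes "A \<in> so n"
  shows "reflect m A \<in> so n"
proof (rule soI)
  fix i j
  show "reflect m A i j = - reflect m A j i"
    using so_skew[OF assms, of i j] by (simp add: reflect_def)
  show "n \<le> i \<or> n \<le> j \<Longrightarrow> reflect m A i j = 0"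
    using so_outside[OF assms, of i j] by (simp add: reflect_def)
qed

lemma mmul_reflect: "mmul n (reflect m A) (reflect m B) = reflect m (mmul n A B)"
proof -
  have "(\<Sum>k<n. refl_sign m i * refl_sign m k * A i k * (refl_sign m k * refl_sign m j * B k j))
      = refl_sign m i * refl_sign m j * (\<Sum>k<n. A i k * B k j)" for i j
    by (simp add: sum_distrib_left) (rule sum.cong, auto simp: refl_sign_def)
  then show ?thesis by (simp add: mmul_def reflect_def fun_eq_iff)
qed

lemma bracket_reflect: "bracket n (reflect m A) (reflect m B) = reflect m (bracket n A B)"
  by (simp add: bracket_def mmul_reflect) (simp add: reflect_def fun_eq_iff algebra_simps)

lemma weighted_form_reflect: "weighted_form n c (reflect m A) (reflect m B) = weighted_form n c A B"
  unfolding weighted_form_def reflect_def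
  by (rule arg_cong[where f = uminus], intro sum.cong refl) (auto simp: refl_sign_def)

lemma koszul_reflect:
  "koszul n (weighted_form n c) (reflect m X) (reflect m Y) (reflect m Z)
   = koszul n (weighted_form n c) X Y Z"
  by (simp add: koszul_def bracket_reflect weighted_form_reflect)

lemma reflect_Ebasis: "reflect m (Ebasis a b) = mat_scale (refl_sign m a * refl_sign m b) (Ebasis a b)"
  by (auto simp: reflect_def mat_scale_def Ebasis_def fun_eq_iff)

locale so_weights =
  fixes n :: nat and c :: "nat \<Rightarrow> nat \<Rightarrow> real"
  assumes weight_pos: "a < n \<Longrightarrow> b < n \<Longrightarrow> a \<noteq> b \<Longrightarrow> 0 < c a b"
    and weight_sym: "c a b = c b a"
begin

abbreviation metric :: "mat \<Rightarrow> mat \<Rightarrow> real" where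
  "metric \<equiv> weighted_form n c"

lemma weighted_form_represents_linear:
  assumes "mat_linear F"
  shows "\<exists>W\<in>so n. \<forall>Z\<in>so n. 2 * metric W Z = F Z"
proof -
  \<comment> \<open>each pair \<open>a < b\<close> is counted twice in \<open>metric W Z\<close>, which is then doubled\<close>
  define W where "W = (\<lambda>a b. if a < b \<and> b < n then F (Ebasis a b) / (4 * c a b)
     else if b < a \<and> a < n then - F (Ebasis b a) / (4 * c b a) else 0)"
  have W: "W \<in> so n" by (rule soI) (auto simp: W_def)
  have "2 * metric W Z = F Z" if Z: "Z \<in> so n" for Z
  proof -
    have pair: "c a b * W a b * Z a b + c b a * W b a * Z b a = 2 * (c a b * W a b * Z a b)" for a b
      using so_skew[OF Z, of b a] so_skew[OF W, of b a] weight_sym[of b a] by simp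
    have "metric W Z = (\<Sum>b<n. \<Sum>a<b. 2 * (c a b * W a b * Z a b))"
      unfolding weighted_form_so_right[OF Z] sum_square_split pair by (simp add: so_diag[OF Z])
    also have "\<dots> = (\<Sum>b<n. \<Sum>a<b. Z a b * F (Ebasis a b) / 2)"
    proof (intro sum.cong refl)
      fix b a assume "b \<in> {..<n}" "a \<in> {..<b}"
      moreover from this have "0 < c a b" by (intro weight_pos) auto
      ultimately show "2 * (c a b * W a b * Z a b) = Z a b * F (Ebasis a b) / 2"
        by (simp add: W_def)
    qed
    also have "\<dots> = F Z / 2"
      by (simp add: mat_linear_so_expansion[OF assms Z] sum_divide_distrib)
    finally show ?thesis by simp
  qed
  with W show ?thesis by blast
qed

lemma weighted_form_pos_definite:
  assumes V: "V \<in> so n" and "metric V V = 0"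
  shows "V = (\<lambda>i j. 0)"
proof -
  have nonneg: "0 \<le> c a k * V a k * V a k" if "a < n" "k < n" for a k
  proof (cases "a = k")
    case False
    with that have "0 < c a k" by (intro weight_pos)
    then show ?thesis by (simp add: mult.assoc)
  qed (simp add: so_diag[OF V])
  have total: "(\<Sum>a<n. \<Sum>k<n. c a k * V a k * V a k) = 0"
    using assms by (simp add: weighted_form_so_right)
  have row_nonneg: "0 \<le> (\<Sum>k<n. c a k * V a k * V a k)" if "a < n" for a
    using nonneg that by (intro sum_nonneg) simp
  have rows: "(\<Sum>k<n. c a k * V a k * V a k) = 0" if "a < n" for a
    using sum_nonneg_eq_0_iff[of "{..<n}" "\<lambda>a. \<Sum>k<n. c a k * V a k * V a k"]
      row_nonneg total that
    by simp
  have "V a k = 0" if "a < n" "k < n" "a \<noteq> k" for a k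
  proof -
    have "c a k * V a k * V a k = 0"
      using sum_nonneg_eq_0_iff[of "{..<n}" "\<lambda>k. c a k * V a k * V a k"] rows nonneg that by simp
    then show ?thesis using weight_pos[OF that] by simp
  qed
  then have "V a k = 0" for a k
    using so_diag[OF V, of a] so_outside[OF V, of a k] by (cases "a < n \<and> k < n \<and> a \<noteq> k") auto
  then show ?thesis by (simp add: fun_eq_iff)
qed

lemma weighted_form_nondegenerate:
  assumes "W1 \<in> so n" "W2 \<in> so n" "\<forall>Z\<in>so n. metric W1 Z = metric W2 Z"
  shows "W1 = W2"
proof -
  define V where "V = (\<lambda>i j. W1 i j - W2 i j)"
  have V: "V \<in> so n"
  proof (rule soI)
    fix i j
    show "V i j = - V j i"
      using so_skew[OF assms(1), of i j] so_skew[OF assms(2), of i j] by (simp add: V_def)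
    show "n \<le> i \<or> n \<le> j \<Longrightarrow> V i j = 0"
      using so_outside[OF assms(1)] so_outside[OF assms(2)] by (simp add: V_def)
  qed
  have "metric V V = metric W1 V - metric W2 V"
    by (subst (1) V_def) (rule weighted_form_diff_left)
  then have "metric V V = 0" using assms(3) V by simp
  then show ?thesis using weighted_form_pos_definite[OF V] by (simp add: V_def fun_eq_iff)
qed

lemma koszul_solution_unique:
  "\<exists>!W. W \<in> so n \<and> (\<forall>Z\<in>so n. 2 * metric W Z = koszul n metric X Y Z)"
proof -
  obtain W where W: "W \<in> so n" "\<forall>Z\<in>so n. 2 * metric W Z = koszul n metric X Y Z"
    using weighted_form_represents_linear[OF mat_linear_koszul] by blast
  moreover have "W' = W"
    if W': "W' \<in> so n" "\<forall>Z\<in>so n. 2 * metric W' Z = koszul n metric X Y Z" for W'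
  proof (rule weighted_form_nondegenerate[OF W'(1) W(1)], intro ballI)
    fix Z assume "Z \<in> so n"
    with W'(2) W(2) show "metric W' Z = metric W Z" by fastforce
  qed
  ultimately show ?thesis by blast
qed

lemma levi_civita_koszul:
  "levi_civita n metric X Y \<in> so n \<and>
   (\<forall>Z\<in>so n. 2 * metric (levi_civita n metric X Y) Z = koszul n metric X Y Z)"
  unfolding levi_civita_def_koszul by (rule theI'[OF koszul_solution_unique])

lemma levi_civita_eqI:
  assumes "W \<in> so n" "\<forall>Z\<in>so n. 2 * metric W Z = koszul n metric X Y Z"
  shows "levi_civita n metric X Y = W"
  unfolding levi_civita_def_koszul using assms
  by (intro the1_equality[OF koszul_solution_unique]) auto

lemma levi_civita_scale_left:
  "levi_civita n metric (mat_scale t X) Y = mat_scale t (levi_civita n metric X Y)"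
  using levi_civita_koszul[of X Y]
  by (intro levi_civita_eqI) (simp_all add: mat_scale_so weighted_form_scale_left koszul_scale_left)

lemma levi_civita_scale_right:
  "levi_civita n metric X (mat_scale t Y) = mat_scale t (levi_civita n metric X Y)"
  using levi_civita_koszul[of X Y]
  by (intro levi_civita_eqI) (simp_all add: mat_scale_so weighted_form_scale_left koszul_scale_middle)

lemma curv_scale_left: "curv n metric (mat_scale t W) X Y = mat_scale t (curv n metric W X Y)"
  by (simp add: curv_def levi_civita_scale_left levi_civita_scale_right bracket_scale_left)
    (simp add: mat_scale_def algebra_simps)

lemma curv_scale_middle: "curv n metric W (mat_scale t X) Y = mat_scale t (curv n metric W X Y)"
  by (simp add: curv_def levi_civita_scale_left levi_civita_scale_right bracket_scale_right)
    (simp add: mat_scale_def algebra_simps)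

lemma ricci_scale_left: "ricci n metric (mat_scale t X) Y = t * ricci n metric X Y"
  by (simp add: ricci_def so_trace_def curv_scale_middle sum_distrib_left) (simp add: mat_scale_def)

lemma levi_civita_reflect:
  "levi_civita n metric (reflect m X) (reflect m Y) = reflect m (levi_civita n metric X Y)"
proof (rule levi_civita_eqI)
  show "reflect m (levi_civita n metric X Y) \<in> so n"
    using levi_civita_koszul[of X Y] reflect_so by blast
  show "\<forall>Z\<in>so n. 2 * metric (reflect m (levi_civita n metric X Y)) Z
                 = koszul n metric (reflect m X) (reflect m Y) Z"
  proof
    fix Z assume "Z \<in> so n"
    then have "2 * metric (levi_civita n metric X Y) (reflect m Z)
             = koszul n metric X Y (reflect m Z)"
      using levi_civita_koszul[of X Y] reflect_so by blast
    then show "2 * metric (reflect m (levi_civita n metric X Y)) Z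
             = koszul n metric (reflect m X) (reflect m Y) Z"
      using weighted_form_reflect[of n c m _ "reflect m Z"] koszul_reflect[of n c m X Y "reflect m Z"]
      by simp
  qed
qed

lemma curv_reflect:
  "curv n metric (reflect m W) (reflect m X) (reflect m Y) = reflect m (curv n metric W X Y)"
  by (simp add: curv_def levi_civita_reflect bracket_reflect) (simp add: reflect_def algebra_simps)

lemma ricci_reflect: "ricci n metric (reflect m X) (reflect m Y) = ricci n metric X Y"
proof -
  \<comment> \<open>the signs by which \<open>reflect m\<close> multiplies \<open>E\<^sub>a\<^sub>b\<close> cancel in the diagonal entry\<close>
  have "curv n metric (Ebasis a b) (reflect m X) (reflect m Y) a b
      = curv n metric (Ebasis a b) X Y a b" for a b
  proof -
    have "curv n metric (Ebasis a b) (reflect m X) (reflect m Y)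
        = reflect m (curv n metric (reflect m (Ebasis a b)) X Y)"
      using curv_reflect[of m "reflect m (Ebasis a b)" X Y] by simp
    also have "\<dots>
        = reflect m (mat_scale (refl_sign m a * refl_sign m b) (curv n metric (Ebasis a b) X Y))"
      by (simp add: reflect_Ebasis curv_scale_left)
    finally show ?thesis by (simp add: reflect_def mat_scale_def refl_sign_def)
  qed
  then show ?thesis by (simp add: ricci_def so_trace_def)
qed

end

definition block_pair :: "nat \<Rightarrow> nat \<Rightarrow> nat \<Rightarrow> nat \<Rightarrow> nat \<Rightarrow> nat \<Rightarrow> bool" where
  "block_pair k1 k2 i j a b \<longleftrightarrow>
     (blk k1 k2 a = i \<and> blk k1 k2 b = j) \<or> (blk k1 k2 a = j \<and> blk k1 k2 b = i)"

lemma block_pair_commute: "block_pair k1 k2 i j a b = block_pair k1 k2 i j b a"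
  by (auto simp: block_pair_def)

lemma proj_diag_block_pair:
  "proj_diag k1 k2 i X = (\<lambda>a b. if block_pair k1 k2 i i a b then X a b else 0)"
  by (simp add: proj_diag_def block_pair_def)

lemma proj_off_block_pair:
  "proj_off k1 k2 i j X = (\<lambda>a b. if block_pair k1 k2 i j a b then X a b else 0)"
  by (simp add: proj_off_def block_pair_def)

lemma killing_block_pair:
  "killing n (\<lambda>a b. if block_pair k1 k2 i j a b then X a b else 0)
             (\<lambda>a b. if block_pair k1 k2 i j a b then Y a b else 0)
   = (real n - 2) * (\<Sum>a<n. \<Sum>k<n. of_bool (block_pair k1 k2 i j a k) * X a k * Y k a)"
proof -
  have "(if block_pair k1 k2 i j a k then X a k else 0)
        * (if block_pair k1 k2 i j k a then Y k a else 0)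
      = of_bool (block_pair k1 k2 i j a k) * X a k * Y k a" for a k
    by (auto simp: block_pair_def)
  then show ?thesis by (simp add: killing_def mtrace_def mmul_def)
qed

definition metricIII_weight :: "nat \<Rightarrow> real \<Rightarrow> real \<Rightarrow> real \<Rightarrow> real \<Rightarrow> nat \<Rightarrow> nat \<Rightarrow> real" where
  "metricIII_weight n x1 x12 x13 x23 a b = (real n - 2) *
     (x1 * of_bool (block_pair (n - 2) 1 1 1 a b) + x12 * of_bool (block_pair (n - 2) 1 1 2 a b)
    + x13 * of_bool (block_pair (n - 2) 1 1 3 a b) + x23 * of_bool (block_pair (n - 2) 1 2 3 a b))"

lemma metricIII_weighted_form:
  "metricIII n x1 x12 x13 x23 = weighted_form n (metricIII_weight n x1 x12 x13 x23)"
  by (simp add: fun_eq_iff metricIII_def Let_def proj_diag_block_pair proj_off_block_pair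
      killing_block_pair weighted_form_def metricIII_weight_def
      sum_distrib_left sum.distrib sum_subtractf algebra_simps)

lemma so_weights_metricIII:
  assumes "3 \<le> n" "0 < x1" "0 < x12" "0 < x13" "0 < x23"
  shows "so_weights n (metricIII_weight n x1 x12 x13 x23)"
proof
  fix a b
  show "metricIII_weight n x1 x12 x13 x23 a b = metricIII_weight n x1 x12 x13 x23 b a"
    by (simp add: metricIII_weight_def block_pair_commute[of _ _ _ _ a b])
  assume "a < n" "b < n" "a \<noteq> b"
  then have "block_pair (n - 2) 1 1 1 a b \<or> block_pair (n - 2) 1 1 2 a b
      \<or> block_pair (n - 2) 1 1 3 a b \<or> block_pair (n - 2) 1 2 3 a b"
    by (auto simp: block_pair_def blk_def)
  then have "0 < x1 * of_bool (block_pair (n - 2) 1 1 1 a b)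
    + x12 * of_bool (block_pair (n - 2) 1 1 2 a b) + x13 * of_bool (block_pair (n - 2) 1 1 3 a b) + x23 * of_bool (block_pair (n - 2) 1 2 3 a b)"
    using assms(2-5) by (auto simp: of_bool_def)
  moreover have "0 < real n - 2" using assms(1) by simp
  ultimately show "0 < metricIII_weight n x1 x12 x13 x23 a b"
    unfolding metricIII_weight_def by (rule mult_pos_pos[rotated])
qed

lemma reflect_m_off_12:
  assumes "X \<in> m_off n k1 1 1 2"
  shows "reflect k1 X = mat_scale (-1) X"
proof (intro ext)
  fix a b
  have "proj_off k1 1 1 2 X a b = X a b"
    using assms by (simp add: m_off_def)
  moreover have "block_pair k1 1 1 2 a b \<Longrightarrow> refl_sign k1 a * refl_sign k1 b = -1"
    by (auto simp: block_pair_def blk_def refl_sign_def split: if_splits)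
  ultimately show "reflect k1 X a b = mat_scale (-1) X a b"
    by (cases "block_pair k1 1 1 2 a b") (auto simp: proj_off_block_pair reflect_def mat_scale_def)
qed

lemma reflect_m_off_13:
  assumes "Y \<in> m_off n k1 1 1 3"
  shows "reflect k1 Y = Y"
proof (intro ext)
  fix a b
  have "proj_off k1 1 1 3 Y a b = Y a b"
    using assms by (simp add: m_off_def)
  moreover have "block_pair k1 1 1 3 a b \<Longrightarrow> refl_sign k1 a * refl_sign k1 b = 1"
    by (auto simp: block_pair_def blk_def refl_sign_def split: if_splits)
  ultimately show "reflect k1 Y a b = Y a b"
    by (cases "block_pair k1 1 1 3 a b") (auto simp: proj_off_block_pair reflect_def)
qed

theorem lemma7p1:
  fixes n :: nat and x1 x12 x13 x23 :: real and X Y :: mat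
  assumes "n \<ge> 5"
    and "x1 > 0" and "x12 > 0" and "x13 > 0" and "x23 > 0"
    and "X \<in> m_off n (n - 2) 1 1 2"
    and "Y \<in> m_off n (n - 2) 1 1 3"
  shows "ricci n (metricIII n x1 x12 x13 x23) X Y = 0"
proof -
  let ?c = "metricIII_weight n x1 x12 x13 x23"
  interpret so_weights n ?c
    using assms(1-5) by (intro so_weights_metricIII) auto
  have "ricci n metric X Y = ricci n metric (reflect (n - 2) X) (reflect (n - 2) Y)"
    by (rule ricci_reflect[symmetric])
  also have "\<dots> = ricci n metric (mat_scale (-1) X) Y"
    by (simp add: reflect_m_off_12[OF assms(6)] reflect_m_off_13[OF assms(7)])
  also have "\<dots> = - ricci n metric X Y"
    by (simp add: ricci_scale_left)
  finally show ?thesis by (simp add: metricIII_weighted_form)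
qed

end
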